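(* Let $r,s\ge0$, let $\Delta=(v_1,\dots,v_n)$ be a collection of vectors in $\mathbb{Z}^2\setminus\{0\}$, let $F\subset\{1,\dots,n\}$ with $r+2s+|F|=|\Delta|-1$, and let $\mathcal{P}$ be a collection of conditions in general position for $\mathrm{ev}_F$. Then a curve $C\in\mathcal{M}_{(r,s)}(\Delta)$ with $\mathrm{ev}_F(C)=\mathcal{P}$ is a refined descendant curve if and only if it is an unoriented refined broccoli curve; in particular the two sets of such curves through $\mathcal{P}$ are in bijection.
   Context: Curves. An $(r,s)$-marked curve of degree $\Delta$ is $C=(\Gamma,h,x_1,\dots,x_{r+s})$ with $\Gamma$ a metric graph whose components are trees, $h:\Gamma\to\mathbb{R}^2$ continuous, affine with integral direction vectors on edges, balanced at vertices; $x_1,\dots,x_r$ (real) and $x_{r+1},\dots,x_{r+s}$ (complex) are contracted unbounded edges (markings), the other unbounded edges $y_1,\dots,y_n$ (labeled ends) have outward direction vectors $\Delta=(v(y_1),\dots,v(y_n))$. $\mathcal{M}_{(r,s)}(\Delta)$ is the polyhedral complex of isomorphism classes of connected such curves (cells = combinatorial types). $\mathrm{ev}_F(C)=(h(x_1),\dots,h(x_{r+s}),(h(y_i))_{i\in F})\in(\mathbb{R}^2)^{r+s}\times\prod_{i\in F}\mathbb{R}^2/\langle v(y_i)\rangle$; $\mathcal P$ is in general position for $\mathrm{ev}_F$ if it avoids the images of all cells whose image has dimension $<2(r+s)+|F|$. Unoriented refined broccoli curve: a curve in $\mathcal{M}_{(r,s)}(\Delta)$ each of whose vertices is (I') 3-valent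 in $\Gamma$ and adjacent to a real marking, (II') 3-valent without marking, or (III') 4-valent in $\Gamma$ and adjacent to a complex marking. Refined descendant curve: a curve in $\mathcal{M}_{(r,s)}(\Delta)$ such that each real marking is adjacent to a 3-valent vertex of $\Gamma$ and each complex marking is adjacent to a 4-valent vertex of $\Gamma$ (unmarked vertices of any valence are allowed). *)

theory Defs
  imports "HOL-Analysis.Analysis"
begin

text \<open>Parametrized rational tropical curves in the plane, given by explicit
combinatorial/metric data.  Vertices are natural numbers; bounded edges are
two-element vertex sets; markings x_i (i < r+s; real for i < r, complex for
r <= i < r+s) and labelled ends y_j (j < length Delta) are unbounded edges
attached at a vertex.  Markings are contracted; end y_j has outward direction
Delta ! j.  The image of the unbounded end y_j is the ray pos(end_at j) + R_{>=0} v_j.\<close>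

record tcurve =
  verts   :: "nat set"
  edges   :: "nat set set"
  elen    :: "nat set \<Rightarrow> real"
  pos     :: "nat \<Rightarrow> real \<times> real"
  mark_at :: "nat \<Rightarrow> nat"
  end_at  :: "nat \<Rightarrow> nat"

definition ivec :: "int \<times> int \<Rightarrow> real \<times> real" where
  "ivec v = (of_int (fst v), of_int (snd v))"

definition edir :: "tcurve \<Rightarrow> nat \<Rightarrow> nat \<Rightarrow> real \<times> real" where
  "edir C u w = (1 / elen C {u, w}) *\<^sub>R (pos C w - pos C u)"

definition nbrs :: "tcurve \<Rightarrow> nat \<Rightarrow> nat set" where
  "nbrs C u = {w. {u, w} \<in> edges C}"

definition marks_at :: "nat \<Rightarrow> tcurve \<Rightarrow> nat \<Rightarrow> nat set" where
  "marks_at m C u = {i. i < m \<and> mark_at C i = u}"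

definition ends_at :: "nat \<Rightarrow> tcurve \<Rightarrow> nat \<Rightarrow> nat set" where
  "ends_at n C u = {j. j < n \<and> end_at C j = u}"

definition valence :: "nat \<Rightarrow> nat \<Rightarrow> tcurve \<Rightarrow> nat \<Rightarrow> nat" where
  "valence m n C u = card (nbrs C u) + card (marks_at m C u) + card (ends_at n C u)"

text \<open>C is a connected (r,s)-marked curve of degree Delta, i.e. represents a
point of M_{(r,s)}(Delta).\<close>
definition is_curve :: "nat \<Rightarrow> nat \<Rightarrow> (int \<times> int) list \<Rightarrow> tcurve \<Rightarrow> bool" where
  "is_curve r s Delta C \<longleftrightarrow>
     finite (verts C) \<and> verts C \<noteq> {} \<and>
     (\<forall>e\<in>edges C. \<exists>u w. e = {u, w} \<and> u \<noteq> w \<and> u \<in> verts C \<and> w \<in> verts C) \<and>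
     (\<forall>e\<in>edges C. elen C e > 0) \<and>
     \<comment> \<open>Gamma is a tree: connected, and #edges = #vertices - 1\<close>
     (\<forall>u\<in>verts C. \<forall>w\<in>verts C. (u, w) \<in> {(a, b). {a, b} \<in> edges C}\<^sup>*) \<and>
     card (edges C) + 1 = card (verts C) \<and>
     (\<forall>i<r+s. mark_at C i \<in> verts C) \<and>
     (\<forall>j<length Delta. end_at C j \<in> verts C) \<and>
     \<comment> \<open>integral direction vectors on bounded edges\<close>
     (\<forall>u w. {u, w} \<in> edges C \<longrightarrow> (\<exists>v::int \<times> int. edir C u w = ivec v)) \<and>
     \<comment> \<open>balancing (contracted markings contribute zero)\<close>
     (\<forall>u\<in>verts C. (\<Sum>w\<in>nbrs C u. edir C u w) + (\<Sum>j\<in>ends_at (length Delta) C u. ivec (Delta ! j)) = 0) \<and>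
     \<comment> \<open>no vertices of valence 1 or 2\<close>
     (\<forall>u\<in>verts C. valence (r+s) (length Delta) C u \<ge> 3)"

definition same_type :: "nat \<Rightarrow> nat \<Rightarrow> tcurve \<Rightarrow> tcurve \<Rightarrow> bool" where
  "same_type m n C C' \<longleftrightarrow>
     (\<exists>f. bij_betw f (verts C) (verts C') \<and>
          edges C' = (\<lambda>e. f ` e) ` edges C \<and>
          (\<forall>i<m. mark_at C' i = f (mark_at C i)) \<and>
          (\<forall>j<n. end_at C' j = f (end_at C j)) \<and>
          (\<forall>u w. {u, w} \<in> edges C \<longrightarrow> edir C' (f u) (f w) = edir C u w))"

text \<open>Coordinates of the target (R^2)^{r+s} x prod_{j in F} R^2/<v_j>.
R^2/<v> is identified with R via the linear isomorphism [p] |-> det(v,p).\<close>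
datatype evcoord = MX nat | MY nat | EQ nat

definition detq :: "int \<times> int \<Rightarrow> real \<times> real \<Rightarrow> real" where
  "detq v p = of_int (fst v) * snd p - of_int (snd v) * fst p"

definition ev :: "nat \<Rightarrow> nat \<Rightarrow> (int \<times> int) list \<Rightarrow> nat set \<Rightarrow> tcurve \<Rightarrow> evcoord \<Rightarrow> real" where
  "ev r s Delta F C c = (case c of
      MX i \<Rightarrow> if i < r + s then fst (pos C (mark_at C i)) else 0
    | MY i \<Rightarrow> if i < r + s then snd (pos C (mark_at C i)) else 0
    | EQ j \<Rightarrow> if j \<in> F then detq (Delta ! j) (pos C (end_at C j)) else 0)"

definition aff_indep :: "(evcoord \<Rightarrow> real) list \<Rightarrow> bool" where
  "aff_indep ps \<longleftrightarrow> ps \<noteq> [] \<and>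
     (\<forall>c::nat \<Rightarrow> real. (\<forall>k. (\<Sum>i\<in>{1..<length ps}. c i * ((ps ! i) k - (ps ! 0) k)) = 0)
        \<longrightarrow> (\<forall>i\<in>{1..<length ps}. c i = 0))"

definition dim_less :: "(evcoord \<Rightarrow> real) set \<Rightarrow> nat \<Rightarrow> bool" where
  "dim_less S N \<longleftrightarrow> \<not> (\<exists>ps. length ps = N + 1 \<and> set ps \<subseteq> S \<and> aff_indep ps)"

definition cell_image :: "nat \<Rightarrow> nat \<Rightarrow> (int \<times> int) list \<Rightarrow> nat set \<Rightarrow> tcurve \<Rightarrow> (evcoord \<Rightarrow> real) set" where
  "cell_image r s Delta F C =
     ev r s Delta F ` {C'. is_curve r s Delta C' \<and> same_type (r+s) (length Delta) C C'}"

definition general_position :: "nat \<Rightarrow> nat \<Rightarrow> (int \<times> int) list \<Rightarrow> nat set \<Rightarrow> (evcoord \<Rightarrow> real) \<Rightarrow> bool" where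
  "general_position r s Delta F P \<longleftrightarrow>
     (\<forall>C. is_curve r s Delta C \<and> dim_less (cell_image r s Delta F C) (2 * (r + s) + card F)
          \<longrightarrow> P \<notin> cell_image r s Delta F C)"

definition has_real_mark :: "nat \<Rightarrow> tcurve \<Rightarrow> nat \<Rightarrow> bool" where
  "has_real_mark r C u \<longleftrightarrow> (\<exists>i<r. mark_at C i = u)"

definition has_cplx_mark :: "nat \<Rightarrow> nat \<Rightarrow> tcurve \<Rightarrow> nat \<Rightarrow> bool" where
  "has_cplx_mark r s C u \<longleftrightarrow> (\<exists>i. r \<le> i \<and> i < r + s \<and> mark_at C i = u)"

definition unoriented_refined_broccoli :: "nat \<Rightarrow> nat \<Rightarrow> (int \<times> int) list \<Rightarrow> tcurve \<Rightarrow> bool" where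
  "unoriented_refined_broccoli r s Delta C \<longleftrightarrow>
     (\<forall>u\<in>verts C.
        (valence (r+s) (length Delta) C u = 3 \<and> has_real_mark r C u)
      \<or> (valence (r+s) (length Delta) C u = 3 \<and> marks_at (r+s) C u = {})
      \<or> (valence (r+s) (length Delta) C u = 4 \<and> has_cplx_mark r s C u))"

definition refined_descendant :: "nat \<Rightarrow> nat \<Rightarrow> (int \<times> int) list \<Rightarrow> tcurve \<Rightarrow> bool" where
  "refined_descendant r s Delta C \<longleftrightarrow>
     (\<forall>i<r. valence (r+s) (length Delta) C (mark_at C i) = 3) \<and>
     (\<forall>i. r \<le> i \<and> i < r + s \<longrightarrow> valence (r+s) (length Delta) C (mark_at C i) = 4)"

end

theory Submission
  imports Defs "HOL-Library.Function_Algebras"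
begin

text \<open>Since \<open>\<P>\<close> is in general position, the cell of a curve \<open>C\<close> through \<open>\<P>\<close> has an
\<open>ev\<^sub>F\<close>-image of full dimension \<open>2(r+s) + |F|\<close>. That image has dimension at most
\<open>2 #(marked vertices) + |F|\<close>, and at most \<open>#E + 2\<close> because all vertex positions depend
affinely on the position of one vertex and the edge lengths. Hence the markings sit at pairwise
distinct vertices and \<open>#E + 3 \<ge> |\<Delta>| + r\<close>. Together with \<open>#V = #E + 1\<close> and the handshake
bound \<open>\<Sum> val \<le> 2 #E + r + s + |\<Delta>|\<close> this leaves no room for an unmarked vertex of valence
at least 4 on a refined descendant curve, and distinctness of the markings makes the broccoli
conditions at marked vertices coincide with the descendant conditions.\<close>

definition scale_coords :: "real \<Rightarrow> (evcoord \<Rightarrow> real) \<Rightarrow> evcoord \<Rightarrow> real" where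
  "scale_coords c x = (\<lambda>k. c * x k)"

interpretation coords: vector_space scale_coords
  by unfold_locales (auto simp: scale_coords_def fun_eq_iff algebra_simps)

lemma sum_fun_apply: "sum g A k = (\<Sum>a\<in>A. g a k)"
  for g :: "'a \<Rightarrow> 'b \<Rightarrow> 'c::comm_monoid_add"
  by (induction A rule: infinite_finite_induct) auto

lemma aff_indep_differences:
  assumes "aff_indep ps"
  defines "d \<equiv> \<lambda>i. ps ! i - ps ! 0"
  shows "inj_on d {1..<length ps}" and "coords.independent (d ` {1..<length ps})"
proof -
  let ?I = "{1..<length ps}"
  have vanish: "\<forall>i\<in>?I. c i = 0" if "\<And>k. (\<Sum>i\<in>?I. c i * d i k) = 0" for c
    using assms that unfolding aff_indep_def d_def by auto
  show inj: "inj_on d ?I"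
  proof (rule inj_onI, rule ccontr)
    fix i j assume ij: "i \<in> ?I" "j \<in> ?I" "d i = d j" "i \<noteq> j"
    define c where "c l = (if l = i then 1 else 0) - (if l = j then 1 else 0 :: real)" for l
    have "c l * d l k = (if l = i then d l k else 0) - (if l = j then d l k else 0)" for l k
      by (simp add: c_def left_diff_distrib)
    then have "(\<Sum>l\<in>?I. c l * d l k) = d i k - d j k" for k
      using ij by (simp add: sum_subtractf)
    then have "c i = 0" using vanish[of c] ij by simp
    then show False using ij by (simp add: c_def)
  qed
  show "coords.independent (d ` ?I)"
  proof
    assume "coords.dependent (d ` ?I)"
    then obtain u where nz: "\<exists>v\<in>d ` ?I. u v \<noteq> 0" and zero: "(\<Sum>v\<in>d ` ?I. scale_coords (u v) v) = 0"
      by (auto simp: coords.dependent_finite)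
    have "(\<Sum>i\<in>?I. u (d i) * d i k) = 0" for k
      using fun_cong[OF zero, of k] inj by (simp add: sum_fun_apply scale_coords_def sum.reindex)
    then show False using vanish[of "u \<circ> d"] nz by auto
  qed
qed

lemma dim_less_if_subset_span:
  assumes "finite T" and "S \<subseteq> coords.span T" and "card T < N"
  shows "dim_less S N"
  unfolding dim_less_def
proof (intro notI, elim exE conjE)
  fix ps assume len: "length ps = N + 1" and sub: "set ps \<subseteq> S" and ai: "aff_indep ps"
  define d where "d i = ps ! i - ps ! 0" for i
  have "ps ! i \<in> coords.span T" if "i < length ps" for i
    using that sub assms(2) nth_mem by blast
  then have "d ` {1..<N + 1} \<subseteq> coords.span T"
    using len by (auto simp: d_def intro!: coords.span_diff)
  then have "card (d ` {1..<N + 1}) \<le> card T"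
    using coords.independent_span_bound[OF assms(1)] aff_indep_differences(2)[OF ai] len
    by (simp add: d_def)
  moreover have "card (d ` {1..<N + 1}) = N"
    using aff_indep_differences(1)[OF ai] len by (simp add: d_def card_image)
  ultimately show False using assms(3) by simp
qed

lemma dim_less_if_pointwise_sums:
  assumes "finite B" and "card B < N"
    and "\<And>x. x \<in> S \<Longrightarrow> \<exists>c. \<forall>k. x k = (\<Sum>b\<in>B. c b * g b k)"
  shows "dim_less S N"
proof (rule dim_less_if_subset_span)
  show "S \<subseteq> coords.span (g ` B)"
  proof
    fix x assume "x \<in> S"
    then obtain c where "\<forall>k. x k = (\<Sum>b\<in>B. c b * g b k)" using assms(3) by blast
    then have "x = (\<Sum>b\<in>B. scale_coords (c b) (g b))"
      by (simp add: fun_eq_iff sum_fun_apply scale_coords_def)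
    then show "x \<in> coords.span (g ` B)"
      by (simp add: coords.span_sum coords.span_scale coords.span_base)
  qed
  show "card (g ` B) < N" using card_image_le[OF assms(1), of g] assms(2) by linarith
qed (use assms(1) in simp)

lemma dim_less_if_factors_through:
  assumes "finite K" and "card (\<rho> ` K) < N"
    and vanish: "\<And>x k. x \<in> S \<Longrightarrow> k \<notin> K \<Longrightarrow> x k = 0"
    and factors: "\<And>x k k'. x \<in> S \<Longrightarrow> k \<in> K \<Longrightarrow> k' \<in> K \<Longrightarrow> \<rho> k = \<rho> k' \<Longrightarrow> x k = x k'"
  shows "dim_less S N"
proof (rule dim_less_if_pointwise_sums[where g = "\<lambda>q k. of_bool (k \<in> K \<and> \<rho> k = q)"])
  fix x assume x: "x \<in> S"
  define rep where "rep q = (SOME k. k \<in> K \<and> \<rho> k = q)" for q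
  have rep: "rep (\<rho> k) \<in> K \<and> \<rho> (rep (\<rho> k)) = \<rho> k" if "k \<in> K" for k
    unfolding rep_def by (rule someI[of _ k]) (simp add: that)
  have "x k = (\<Sum>q\<in>\<rho> ` K. x (rep q) * of_bool (k \<in> K \<and> \<rho> k = q))" for k
  proof (cases "k \<in> K")
    case True
    have "(\<Sum>q\<in>\<rho> ` K. x (rep q) * of_bool (k \<in> K \<and> \<rho> k = q)) = x (rep (\<rho> k))"
      using True assms(1) by (simp add: sum.delta')
    also have "\<dots> = x k"
      using factors[OF x _ True] rep[OF True] by blast
    finally show ?thesis by simp
  qed (simp add: vanish[OF x])
  then show "\<exists>c. \<forall>k. x k = (\<Sum>q\<in>\<rho> ` K. c q * of_bool (k \<in> K \<and> \<rho> k = q))"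
    by (intro exI[of _ "\<lambda>q. x (rep q)"]) blast
qed (use assms(1,2) in simp_all)

lemma
  assumes "is_curve r s Delta C"
  shows is_curve_finite_verts: "finite (verts C)"
    and is_curve_verts_nonempty: "verts C \<noteq> {}"
    and is_curve_edge_doubleton: "e \<in> edges C \<Longrightarrow> \<exists>u w. e = {u, w} \<and> u \<noteq> w \<and> u \<in> verts C \<and> w \<in> verts C"
    and is_curve_elen_pos: "e \<in> edges C \<Longrightarrow> elen C e > 0"
    and is_curve_connected: "u \<in> verts C \<Longrightarrow> w \<in> verts C \<Longrightarrow> (u, w) \<in> {(a, b). {a, b} \<in> edges C}\<^sup>*"
    and is_curve_card_edges: "card (edges C) + 1 = card (verts C)"
    and is_curve_mark_in_verts: "i < r + s \<Longrightarrow> mark_at C i \<in> verts C"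
    and is_curve_end_in_verts: "j < length Delta \<Longrightarrow> end_at C j \<in> verts C"
    and is_curve_valence_ge_3: "u \<in> verts C \<Longrightarrow> 3 \<le> valence (r + s) (length Delta) C u"
  using assms unfolding is_curve_def by blast+

lemma is_curve_finite_edges:
  assumes "is_curve r s Delta C"
  shows "finite (edges C)"
proof (rule finite_subset)
  show "edges C \<subseteq> Pow (verts C)" using is_curve_edge_doubleton[OF assms] by blast
qed (simp add: is_curve_finite_verts[OF assms])

lemma sum_card_le_card_if_inj_on_Sigma:
  assumes "finite A" and "\<forall>a\<in>A. finite (B a)"
    and "inj_on g (Sigma A B)" and "g ` Sigma A B \<subseteq> D" and "finite D"
  shows "(\<Sum>a\<in>A. card (B a)) \<le> card D"
  using card_inj_on_le[OF assms(3-5)] assms(1,2) by (simp add: card_SigmaI)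

lemma sum_valence_le:
  assumes c: "is_curve r s Delta C"
  shows "(\<Sum>u\<in>verts C. valence m n C u) \<le> 2 * card (edges C) + m + n"
proof -
  have finV: "finite (verts C)" using c by (rule is_curve_finite_verts)
  have nbrs: "w \<in> verts C \<and> u \<noteq> w" if "w \<in> nbrs C u" for u w
    using that is_curve_edge_doubleton[OF c] by (fastforce simp: nbrs_def doubleton_eq_iff)
  have "(\<Sum>u\<in>verts C. card (nbrs C u)) \<le> card (edges C \<times> (UNIV :: bool set))"
  proof (rule sum_card_le_card_if_inj_on_Sigma[where g = "\<lambda>(u, w). ({u, w}, u < w)"])
    show "\<forall>u\<in>verts C. finite (nbrs C u)" using finV nbrs by (meson finite_subset subsetI)
    show "inj_on (\<lambda>(u, w). ({u, w}, u < w)) (Sigma (verts C) (nbrs C))"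
      using nbrs by (fastforce simp: inj_on_def doubleton_eq_iff)
    show "finite (edges C \<times> (UNIV :: bool set))" using is_curve_finite_edges[OF c] by simp
  qed (auto simp: finV nbrs_def)
  moreover have "(\<Sum>u\<in>verts C. card (marks_at m C u)) \<le> card {..<m}"
    by (rule sum_card_le_card_if_inj_on_Sigma[where g = snd])
      (auto simp: finV marks_at_def inj_on_def)
  moreover have "(\<Sum>u\<in>verts C. card (ends_at n C u)) \<le> card {..<n}"
    by (rule sum_card_le_card_if_inj_on_Sigma[where g = snd])
      (auto simp: finV ends_at_def inj_on_def)
  ultimately show ?thesis
    using is_curve_finite_edges[OF c] by (simp add: valence_def sum.distrib card_cartesian_product)
qed

lemma detq_scaleR: "detq v (c *\<^sub>R p) = c * detq v p"
  by (simp add: detq_def algebra_simps)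

lemma detq_sum: "detq v (\<Sum>b\<in>B. p b) = (\<Sum>b\<in>B. detq v (p b))"
  by (induction B rule: infinite_finite_induct) (auto simp: detq_def algebra_simps)

text \<open>\<open>ev_at r s Delta F C q\<close> is \<open>ev\<^sub>F\<close> of a curve of the combinatorial type of \<open>C\<close>
whose vertex \<open>u\<close> is placed at \<open>q u\<close>.\<close>

definition ev_at :: "nat \<Rightarrow> nat \<Rightarrow> (int \<times> int) list \<Rightarrow> nat set \<Rightarrow> tcurve \<Rightarrow> (nat \<Rightarrow> real \<times> real) \<Rightarrow> evcoord \<Rightarrow> real" where
  "ev_at r s Delta F C q k = (case k of
      MX i \<Rightarrow> if i < r + s then fst (q (mark_at C i)) else 0
    | MY i \<Rightarrow> if i < r + s then snd (q (mark_at C i)) else 0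
    | EQ j \<Rightarrow> if j \<in> F then detq (Delta ! j) (q (end_at C j)) else 0)"

lemma ev_at_sum:
  "ev_at r s Delta F C (\<lambda>u. \<Sum>b\<in>B. c b *\<^sub>R Q b u) k = (\<Sum>b\<in>B. c b * ev_at r s Delta F C (Q b) k)"
  by (cases k) (auto simp: ev_at_def fst_sum snd_sum detq_sum detq_scaleR)

lemma ev_at_cong:
  assumes "\<And>i. i < r + s \<Longrightarrow> q (mark_at C i) = q' (mark_at C i)"
    and "\<And>j. j \<in> F \<Longrightarrow> q (end_at C j) = q' (end_at C j)"
  shows "ev_at r s Delta F C q = ev_at r s Delta F C q'"
  using assms by (auto simp: fun_eq_iff ev_at_def split: evcoord.split)

definition edge_type_map :: "tcurve \<Rightarrow> tcurve \<Rightarrow> (nat \<Rightarrow> nat) \<Rightarrow> bool" where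
  "edge_type_map C C' f \<longleftrightarrow> (\<forall>e\<in>edges C'. elen C' e > 0) \<and> edges C' = (\<lambda>e. f ` e) ` edges C \<and>
     (\<forall>a b. {a, b} \<in> edges C \<longrightarrow> edir C' (f a) (f b) = edir C a b)"

lemma cell_image_ev_at:
  assumes "x \<in> cell_image r s Delta F C" and "F \<subseteq> {..<length Delta}"
  obtains C' f where "edge_type_map C C' f" and "x = ev_at r s Delta F C (pos C' \<circ> f)"
proof -
  from assms(1) obtain C' where C': "is_curve r s Delta C'" "same_type (r + s) (length Delta) C C'"
    and x: "x = ev r s Delta F C'" unfolding cell_image_def by auto
  from C'(2) obtain f where ed: "edges C' = (\<lambda>e. f ` e) ` edges C"
    and fm: "\<forall>i<r+s. mark_at C' i = f (mark_at C i)"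
    and fe: "\<forall>j<length Delta. end_at C' j = f (end_at C j)"
    and dir: "\<forall>u w. {u, w} \<in> edges C \<longrightarrow> edir C' (f u) (f w) = edir C u w"
    unfolding same_type_def by (elim exE conjE) (rule that)
  have "edge_type_map C C' f"
    unfolding edge_type_map_def using ed dir is_curve_elen_pos[OF C'(1)] by (intro conjI ballI) simp_all
  moreover have "x = ev_at r s Delta F C (pos C' \<circ> f)"
    using fm fe assms(2) by (auto simp: x fun_eq_iff ev_def ev_at_def split: evcoord.split)
  ultimately show ?thesis by (rule that)
qed

lemma dim_less_cell_image_marks:
  assumes "F \<subseteq> {..<length Delta}" and "2 * card (mark_at C ` {..<r+s}) + card F < N"
  shows "dim_less (cell_image r s Delta F C) N"
proof -
  let ?M = "mark_at C ` {..<r+s}"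
  define K where "K = MX ` {..<r+s} \<union> MY ` {..<r+s} \<union> EQ ` F"
  define \<rho> where "\<rho> k = (case k of MX i \<Rightarrow> Inl (mark_at C i, True) | MY i \<Rightarrow> Inl (mark_at C i, False)
      | EQ j \<Rightarrow> Inr j)" for k
  have finF: "finite F" using assms(1) finite_subset by blast
  have "\<rho> ` K \<subseteq> (?M \<times> UNIV) <+> F" by (auto simp: K_def \<rho>_def)
  then have "card (\<rho> ` K) \<le> card ((?M \<times> (UNIV :: bool set)) <+> F)"
    using finF by (intro card_mono) auto
  also have "\<dots> = 2 * card ?M + card F"
    using finF by (simp add: card_Plus card_cartesian_product)
  finally have "card (\<rho> ` K) < N" using assms(2) by linarith
  show ?thesis
  proof (rule dim_less_if_factors_through[where K = K and \<rho> = \<rho>])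
    show "finite K" using finF by (simp add: K_def)
    show "card (\<rho> ` K) < N" by fact
  next
    fix x k assume "x \<in> cell_image r s Delta F C" "k \<notin> K"
    then show "x k = 0" using assms(1)
      by (auto elim!: cell_image_ev_at simp: K_def ev_at_def split: evcoord.split)
  next
    fix x k k' assume "x \<in> cell_image r s Delta F C" "k \<in> K" "k' \<in> K" "\<rho> k = \<rho> k'"
    then show "x k = x k'" using assms(1)
      by (auto elim!: cell_image_ev_at simp: K_def \<rho>_def ev_at_def)
  qed
qed

lemma pos_eq_add_edir:
  assumes "elen C {u, w} > 0"
  shows "pos C w = pos C u + elen C {u, w} *\<^sub>R edir C u w"
  using assms by (simp add: edir_def)

lemma pos_linear_in_edge_lengths:
  assumes "finite (edges C)" and "(v0, u) \<in> {(a, b). {a, b} \<in> edges C}\<^sup>*"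
  shows "\<exists>W. \<forall>C' f. edge_type_map C C' f \<longrightarrow>
           pos C' (f u) = pos C' (f v0) + (\<Sum>e\<in>edges C. elen C' (f ` e) *\<^sub>R W e)"
  using assms(2)
proof (induction rule: rtrancl_induct)
  case base
  show ?case by (rule exI[of _ "\<lambda>_. 0"]) simp
next
  case (step a b)
  then obtain W where W: "\<And>C' f. edge_type_map C C' f \<Longrightarrow>
      pos C' (f a) = pos C' (f v0) + (\<Sum>e\<in>edges C. elen C' (f ` e) *\<^sub>R W e)" by blast
  have ab: "{a, b} \<in> edges C" using step.hyps(2) by simp
  define W' where "W' e = W e + (if e = {a, b} then edir C a b else 0)" for e
  have "pos C' (f b) = pos C' (f v0) + (\<Sum>e\<in>edges C. elen C' (f ` e) *\<^sub>R W' e)"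
    if T: "edge_type_map C C' f" for C' f
  proof -
    have "f ` {a, b} \<in> edges C'" and dir: "edir C' (f a) (f b) = edir C a b"
      using T ab unfolding edge_type_map_def by blast+
    then have "elen C' {f a, f b} > 0"
      using T unfolding edge_type_map_def by simp
    then have "pos C' (f b) = pos C' (f a) + elen C' {f a, f b} *\<^sub>R edir C a b"
      by (simp add: pos_eq_add_edir dir)
    moreover have "(\<Sum>e\<in>edges C. elen C' (f ` e) *\<^sub>R W' e)
        = (\<Sum>e\<in>edges C. elen C' (f ` e) *\<^sub>R W e) + elen C' {f a, f b} *\<^sub>R edir C a b"
    proof -
      have "elen C' (f ` e) *\<^sub>R W' e = elen C' (f ` e) *\<^sub>R W e
          + (if e = {a, b} then elen C' (f ` e) *\<^sub>R edir C a b else 0)" for e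
        by (simp add: W'_def scaleR_add_right)
      then show ?thesis using assms(1) ab by (simp add: sum.distrib)
    qed
    ultimately show ?thesis using W[OF T] by simp
  qed
  then show ?case by blast
qed

lemma dim_less_cell_image_edges:
  assumes c: "is_curve r s Delta C" and F: "F \<subseteq> {..<length Delta}"
    and lt: "card (edges C) + 2 < N"
  shows "dim_less (cell_image r s Delta F C) N"
proof -
  have finE: "finite (edges C)" using c by (rule is_curve_finite_edges)
  obtain v0 where v0: "v0 \<in> verts C" using is_curve_verts_nonempty[OF c] by blast
  have "\<forall>u\<in>verts C. \<exists>W. \<forall>C' f. edge_type_map C C' f \<longrightarrow>
           pos C' (f u) = pos C' (f v0) + (\<Sum>e\<in>edges C. elen C' (f ` e) *\<^sub>R W e)"
    using pos_linear_in_edge_lengths[OF finE is_curve_connected[OF c v0]] by blast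
  then obtain W where W: "\<And>u C' f. u \<in> verts C \<Longrightarrow> edge_type_map C C' f \<Longrightarrow>
           pos C' (f u) = pos C' (f v0) + (\<Sum>e\<in>edges C. elen C' (f ` e) *\<^sub>R W u e)"
    by (metis bchoice)
  define B where "B = (UNIV :: bool set) <+> edges C"
  define Q where "Q = case_sum (\<lambda>b u. if b then (1, 0) else (0, 1)) (\<lambda>e u. W u e)"
  show ?thesis
  proof (rule dim_less_if_pointwise_sums[where B = B and g = "\<lambda>b. ev_at r s Delta F C (Q b)"])
    show "finite B" "card B < N" using finE lt by (simp_all add: B_def card_Plus)
  next
    fix x assume "x \<in> cell_image r s Delta F C"
    then obtain C' f where T: "edge_type_map C C' f" and x: "x = ev_at r s Delta F C (pos C' \<circ> f)"
      using F by (rule cell_image_ev_at)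
    define p0 where "p0 = pos C' (f v0)"
    define c where "c = case_sum (\<lambda>b. if b then fst p0 else snd p0) (\<lambda>e. elen C' (f ` e))"
    have "pos C' (f u) = (\<Sum>b\<in>B. c b *\<^sub>R Q b u)" if "u \<in> verts C" for u
      using W[OF that T] finE by (simp add: B_def c_def Q_def sum.Plus UNIV_bool p0_def prod_eq_iff)
    then have "x = ev_at r s Delta F C (\<lambda>u. \<Sum>b\<in>B. c b *\<^sub>R Q b u)"
      unfolding x using F is_curve_mark_in_verts[OF c] is_curve_end_in_verts[OF c]
      by (intro ev_at_cong) auto
    then show "\<exists>c. \<forall>k. x k = (\<Sum>b\<in>B. c b * ev_at r s Delta F C (Q b) k)"
      by (intro exI[of _ c] allI) (simp add: ev_at_sum)
  qed
qed

lemma valence_unmarked_eq_3: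
  assumes c: "is_curve r s Delta C" and inj: "inj_on (mark_at C) {..<r+s}"
    and edges: "length Delta + r \<le> card (edges C) + 3"
    and d: "refined_descendant r s Delta C"
    and u: "u \<in> verts C" and unmarked: "marks_at (r+s) C u = {}"
  shows "valence (r+s) (length Delta) C u = 3"
proof (rule ccontr)
  let ?val = "valence (r+s) (length Delta) C"
  assume "?val u \<noteq> 3"
  then have "?val u \<ge> 4" using is_curve_valence_ge_3[OF c u] by linarith
  define K where "K = mark_at C ` {r..<r+s}"
  have KV: "K \<subseteq> verts C" using is_curve_mark_in_verts[OF c] by (auto simp: K_def)
  have uK: "u \<notin> K" using unmarked by (auto simp: K_def marks_at_def)
  have cardK: "card K = s"
    unfolding K_def using inj by (subst card_image) (auto intro: inj_on_subset)
  \<comment> \<open>\<open>3 #V + s + 1 \<le> \<Sum> val \<le> 2 #E + r + s + |\<Delta>|\<close> contradicts the edge bound\<close>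
  have "?val w \<ge> 3 + of_bool (w \<in> K) + of_bool (w = u)" if "w \<in> verts C" for w
    using d that \<open>?val u \<ge> 4\<close> uK is_curve_valence_ge_3[OF c]
    by (auto simp: K_def refined_descendant_def)
  then have "(\<Sum>w\<in>verts C. 3 + of_bool (w \<in> K) + of_bool (w = u)) \<le> (\<Sum>w\<in>verts C. ?val w)"
    by (rule sum_mono)
  also have "\<dots> \<le> 2 * card (edges C) + (r + s) + length Delta"
    by (rule sum_valence_le[OF c])
  finally have "3 * card (verts C) + card K + 1 \<le> 2 * card (edges C) + (r + s) + length Delta"
    using is_curve_finite_verts[OF c] KV u by (simp add: sum.distrib Int_absorb1 Int_absorb2)
  then show False using cardK edges is_curve_card_edges[OF c] by linarith
qed

lemma broccoli_if_refined_descendant: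
  assumes c: "is_curve r s Delta C" and inj: "inj_on (mark_at C) {..<r+s}"
    and edges: "length Delta + r \<le> card (edges C) + 3"
    and d: "refined_descendant r s Delta C"
  shows "unoriented_refined_broccoli r s Delta C"
  unfolding unoriented_refined_broccoli_def
proof
  fix u assume u: "u \<in> verts C"
  show "valence (r+s) (length Delta) C u = 3 \<and> has_real_mark r C u
      \<or> valence (r+s) (length Delta) C u = 3 \<and> marks_at (r+s) C u = {}
      \<or> valence (r+s) (length Delta) C u = 4 \<and> has_cplx_mark r s C u"
  proof (cases "marks_at (r+s) C u = {}")
    case True
    then show ?thesis using valence_unmarked_eq_3[OF c inj edges d u] by blast
  next
    case False
    then obtain i where i: "i < r + s" "mark_at C i = u" by (auto simp: marks_at_def)
    show ?thesis
    proof (cases "i < r")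
      case True
      then show ?thesis using d i unfolding refined_descendant_def has_real_mark_def by blast
    next
      case False
      then show ?thesis using d i unfolding refined_descendant_def has_cplx_mark_def by (metis not_le)
    qed
  qed
qed

lemma refined_descendant_if_broccoli:
  assumes c: "is_curve r s Delta C" and inj: "inj_on (mark_at C) {..<r+s}"
    and b: "unoriented_refined_broccoli r s Delta C"
  shows "refined_descendant r s Delta C"
proof -
  have "valence (r+s) (length Delta) C (mark_at C i) = (if i < r then 3 else 4)" if i: "i < r + s" for i
  proof -
    have "has_real_mark r C (mark_at C i) \<longleftrightarrow> i < r"
      and "has_cplx_mark r s C (mark_at C i) \<longleftrightarrow> r \<le> i"
      using inj i by (auto simp: has_real_mark_def has_cplx_mark_def dest: inj_onD)
    moreover have "marks_at (r+s) C (mark_at C i) \<noteq> {}" using i by (auto simp: marks_at_def)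
    ultimately show ?thesis
      using b is_curve_mark_in_verts[OF c i] unfolding unoriented_refined_broccoli_def by auto
  qed
  then show ?thesis unfolding refined_descendant_def by auto
qed

lemma general_position_not_dim_less:
  assumes "general_position r s Delta F P" and "is_curve r s Delta C" and "ev r s Delta F C = P"
  shows "\<not> dim_less (cell_image r s Delta F C) (2 * (r + s) + card F)"
proof -
  have "same_type (r + s) (length Delta) C C"
    unfolding same_type_def by (rule exI[of _ id]) auto
  then have "P \<in> cell_image r s Delta F C"
    using assms(2,3) unfolding cell_image_def by blast
  then show ?thesis using assms(1,2) unfolding general_position_def by blast
qed

theorem lemma3p21:
  fixes r s :: nat and Delta :: "(int \<times> int) list" and F :: "nat set"
    and P :: "evcoord \<Rightarrow> real"
  assumes "\<forall>v\<in>set Delta. v \<noteq> (0, 0)"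
    and "F \<subseteq> {..<length Delta}"
    and "r + 2 * s + card F + 1 = length Delta"
    and "general_position r s Delta F P"
  shows "\<forall>C. is_curve r s Delta C \<and> ev r s Delta F C = P \<longrightarrow>
           (refined_descendant r s Delta C \<longleftrightarrow> unoriented_refined_broccoli r s Delta C)"
proof (intro allI impI)
  fix C assume "is_curve r s Delta C \<and> ev r s Delta F C = P"
  then have c: "is_curve r s Delta C"
    and full_dim: "\<not> dim_less (cell_image r s Delta F C) (2 * (r + s) + card F)"
    using general_position_not_dim_less[OF assms(4)] by blast+
  have "\<not> 2 * card (mark_at C ` {..<r+s}) + card F < 2 * (r + s) + card F"
    using full_dim dim_less_cell_image_marks[OF assms(2)] by blast
  then have inj: "inj_on (mark_at C) {..<r+s}"
    using card_image_le[of "{..<r+s}" "mark_at C"] by (intro eq_card_imp_inj_on) auto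
  have "\<not> card (edges C) + 2 < 2 * (r + s) + card F"
    using full_dim dim_less_cell_image_edges[OF c assms(2)] by blast
  then have "length Delta + r \<le> card (edges C) + 3" using assms(3) by presburger
  then show "refined_descendant r s Delta C \<longleftrightarrow> unoriented_refined_broccoli r s Delta C"
    using broccoli_if_refined_descendant refined_descendant_if_broccoli c inj by blast
qed

end
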